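(* Let $L$ be a construction of an ASC-hypergraph $H$ and let $Y\in L$. Then $L_Y$ is a construction of the ASC-hypergraph $H_Y$.
   Context: A hypergraph is a finite set $H$ of nonempty subsets of some finite set; its carrier is $\bigcup H$. For a family $F$ and set $Y$, $F_Y=\{X\in F\mid X\subseteq Y\}$. A hypergraph partition of $H$ is a partition $\{H_1,\dots,H_n\}$ ($n\ge0$) of the set $H$ with $\{\bigcup H_1,\dots,\bigcup H_n\}$ a partition of $\bigcup H$; $H$ is connected if it has exactly one hypergraph partition; the finest hypergraph partition is the unique one whose blocks are connected. $H$ is atomic if $\{x\}\in H$ for all $x\in\bigcup H$; saturated if $X_1,X_2\in H$ with $X_1\cap X_2\neq\emptyset$ imply $X_1\cup X_2\in H$. An ASC-hypergraph is one that is atomic, saturated and connected. Constructions of an atomic $H$, by induction on $|\bigcup H|$: (0) $\emptyset$ is the only construction of $\emptyset$; (1) if $|\bigcup H|\ge1$, $H$ connected, $x\in\bigcup H$, $K$ a construction of $H_{\bigcup H\setminus\{x\}}$, then $K\cup\{\bigcup H\}$ is a construction of $H$; (2) if $H$ is not connected with finest hypergraph partition $\{H_1,\dots,H_n\}$, $n\ge2$, and $K_i$ is a construction of $H_i$, then $K_1\cup\dots\cup K_n$ is a construction of $H$. *)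

theory Defs
  imports Main "HOL-Library.Disjoint_Sets"
begin

definition hypergraph :: "'a set set \<Rightarrow> bool" where
  "hypergraph H \<longleftrightarrow> finite H \<and> (\<forall>X\<in>H. X \<noteq> {} \<and> finite X)"

definition restr :: "'a set set \<Rightarrow> 'a set \<Rightarrow> 'a set set" where
  "restr F Y = {X \<in> F. X \<subseteq> Y}"

definition hyp_partition :: "'a set set \<Rightarrow> 'a set set set \<Rightarrow> bool" where
  "hyp_partition H P \<longleftrightarrow> partition_on H P \<and> inj_on Union P
     \<and> partition_on (\<Union>H) (Union ` P)"

definition hconnected :: "'a set set \<Rightarrow> bool" where
  "hconnected H \<longleftrightarrow> (\<exists>!P. hyp_partition H P)"

definition finest_hyp_partition :: "'a set set \<Rightarrow> 'a set set set \<Rightarrow> bool" where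
  "finest_hyp_partition H P \<longleftrightarrow> hyp_partition H P \<and> (\<forall>B\<in>P. hconnected B)"

definition atomic :: "'a set set \<Rightarrow> bool" where
  "atomic H \<longleftrightarrow> (\<forall>x\<in>\<Union>H. {x} \<in> H)"

definition saturated :: "'a set set \<Rightarrow> bool" where
  "saturated H \<longleftrightarrow> (\<forall>X1\<in>H. \<forall>X2\<in>H. X1 \<inter> X2 \<noteq> {} \<longrightarrow> X1 \<union> X2 \<in> H)"

definition ASC :: "'a set set \<Rightarrow> bool" where
  "ASC H \<longleftrightarrow> atomic H \<and> saturated H \<and> hconnected H"

inductive construction :: "'a set set \<Rightarrow> 'a set set \<Rightarrow> bool" where
  empty: "construction {} {}"
| conn: "\<lbrakk> hypergraph H; atomic H; card (\<Union>H) \<ge> 1; hconnected H; x \<in> \<Union>H;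
           construction K (restr H (\<Union>H - {x})) \<rbrakk>
         \<Longrightarrow> construction (K \<union> {\<Union>H}) H"
| disconn: "\<lbrakk> hypergraph H; atomic H; \<not> hconnected H; finest_hyp_partition H P;
              card P \<ge> 2; \<forall>B\<in>P. construction (K B) B \<rbrakk>
         \<Longrightarrow> construction (\<Union>B\<in>P. K B) H"

end

theory Submission
  imports Defs
begin

(* We prove, by rule induction on the construction L of H, the
   stronger-in-hypothesis statement: if H is merely saturated and Y is in L,
   then H_Y is ASC and L_Y is a construction of H_Y.  Saturation is the right
   invariant since it passes to restrictions and to blocks of a hypergraph
   partition, while atomicity and connectedness of H_Y come for free from the
   construction step that introduced Y.
   - Step (1), L = K + {carrier H}: if Y is the carrier then H_Y = H and
     L_Y = L; otherwise Y lies in K, hence misses the removed vertex x, and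
     both restrictions reduce to those for the smaller hypergraph.
   - Step (2), L = union of constructions K_B of the blocks B: Y lies in one
     K_B, and because the block carriers are disjoint, restricting H resp. L
     to Y only sees the block B resp. its construction K_B. *)

lemma hyp_partition_blocks:
  assumes "hyp_partition H P"
  shows "\<Union>P = H" and "\<forall>B\<in>P. B \<subseteq> H"
  using assms unfolding hyp_partition_def partition_on_def by blast+

lemma hyp_partition_block_eq:
  assumes "hyp_partition H P" "B \<in> P" "B' \<in> P" "\<Union>B \<inter> \<Union>B' \<noteq> {}"
  shows "B = B'"
proof (rule ccontr)
  assume "B \<noteq> B'"
  then have "\<Union>B \<noteq> \<Union>B'" using assms(1-3) unfolding hyp_partition_def inj_on_def by blast
  moreover have "disjoint (Union ` P)"
    using assms(1) unfolding hyp_partition_def partition_on_def by blast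
  ultimately show False
    using assms(2-4) unfolding disjoint_def pairwise_def disjnt_def by blast
qed

lemma construction_members:
  "construction K H \<Longrightarrow> \<forall>Z\<in>K. Z \<noteq> {} \<and> Z \<subseteq> \<Union>H"
proof (induction rule: construction.induct)
  case empty
  then show ?case by simp
next
  case (conn H x K)
  have carrier_sub: "\<Union>(restr H (\<Union>H - {x})) \<subseteq> \<Union>H" by (auto simp: restr_def)
  have "\<Union>H \<noteq> {}" using conn.hyps(5) by auto
  moreover have "Z \<noteq> {} \<and> Z \<subseteq> \<Union>H" if "Z \<in> K" for Z
    using conn.IH that carrier_sub by blast
  ultimately show ?case by auto
next
  case (disconn H P K)
  have blocks_sub: "\<forall>B\<in>P. B \<subseteq> H"
    using disconn.hyps(4) hyp_partition_blocks(2) by (auto simp: finest_hyp_partition_def)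
  show ?case
  proof
    fix Z assume "Z \<in> (\<Union>B\<in>P. K B)"
    then obtain B where "B \<in> P" "Z \<in> K B" by auto
    then have "Z \<noteq> {}" "Z \<subseteq> \<Union>B" "B \<subseteq> H" using disconn.IH blocks_sub by auto
    then show "Z \<noteq> {} \<and> Z \<subseteq> \<Union>H" by auto
  qed
qed

lemma hyp_partition_edge_in_block:
  assumes "hyp_partition H P" "B \<in> P" "X \<in> H" "X \<inter> \<Union>B \<noteq> {}"
  shows "X \<in> B"
proof -
  obtain B' where "B' \<in> P" "X \<in> B'" using hyp_partition_blocks(1)[OF assms(1)] assms(3) by blast
  then have "B = B'" using hyp_partition_block_eq[OF assms(1,2)] assms(4) by blast
  then show ?thesis using \<open>X \<in> B'\<close> by simp
qed

lemma saturated_block: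
  assumes "saturated H" "hyp_partition H P" "B \<in> P"
  shows "saturated B"
  unfolding saturated_def
proof (intro ballI impI)
  fix X1 X2 assume X: "X1 \<in> B" "X2 \<in> B" "X1 \<inter> X2 \<noteq> {}"
  then have "X1 \<union> X2 \<in> H"
    using assms hyp_partition_blocks(2)[OF assms(2)] unfolding saturated_def by blast
  moreover have "(X1 \<union> X2) \<inter> \<Union>B \<noteq> {}" using X by blast
  ultimately show "X1 \<union> X2 \<in> B" using hyp_partition_edge_in_block[OF assms(2,3)] by blast
qed

lemma restr_self: "restr H (\<Union>H) = H"
  by (auto simp: restr_def)

lemma restr_restr: "Y \<subseteq> S \<Longrightarrow> restr (restr H S) Y = restr H Y"
  by (auto simp: restr_def)

lemma restr_insert_not_subset: "\<not> A \<subseteq> Y \<Longrightarrow> restr (K \<union> {A}) Y = restr K Y"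
  by (auto simp: restr_def)

lemma saturated_restr: "saturated H \<Longrightarrow> saturated (restr H S)"
  unfolding saturated_def restr_def by (auto simp del: Un_iff)

lemma restr_to_block:
  assumes "hyp_partition H P" "B \<in> P" "\<forall>X\<in>H. X \<noteq> {}" "Y \<subseteq> \<Union>B"
  shows "restr H Y = restr B Y"
proof -
  have "X \<in> B" if "X \<in> H" "X \<subseteq> Y" for X
  proof -
    have "X \<noteq> {}" using assms(3) that(1) by blast
    moreover have "X \<subseteq> \<Union>B" using that(2) assms(4) by (rule order_trans)
    ultimately have "X \<inter> \<Union>B \<noteq> {}" by (simp add: Int_absorb2)
    then show ?thesis by (rule hyp_partition_edge_in_block[OF assms(1,2) that(1)])
  qed
  then show ?thesis using hyp_partition_blocks(2)[OF assms(1)] assms(2) unfolding restr_def by blast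
qed

lemma restr_UN_to_block:
  assumes "hyp_partition H P" "B \<in> P" "\<forall>B'\<in>P. \<forall>Z\<in>K B'. Z \<noteq> {} \<and> Z \<subseteq> \<Union>B'"
    and "Y \<subseteq> \<Union>B"
  shows "restr (\<Union>B'\<in>P. K B') Y = restr (K B) Y"
proof -
  have "B' = B" if "B' \<in> P" "Z \<in> K B'" "Z \<subseteq> Y" for B' Z
  proof -
    have "Z \<noteq> {}" "Z \<subseteq> \<Union>B'" using assms(3) that(1,2) by blast+
    then have "\<Union>B' \<inter> \<Union>B \<noteq> {}" using that(3) assms(4) by blast
    then show ?thesis by (rule hyp_partition_block_eq[OF assms(1) that(1) assms(2)])
  qed
  then show ?thesis using assms(2) unfolding restr_def by blast
qed

lemma construction_restr:
  "construction L H \<Longrightarrow> saturated H \<Longrightarrow> Y \<in> L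
   \<Longrightarrow> ASC (restr H Y) \<and> construction (restr L Y) (restr H Y)"
proof (induction arbitrary: Y rule: construction.induct)
  case empty
  then show ?case by simp
next
  case (conn H x K)
  show ?case
  proof (cases "Y = \<Union>H")
    case True
    have "\<forall>Z\<in>K. Z \<subseteq> \<Union>H"
      using construction_members[OF conn.hyps(6)] by (auto simp: restr_def)
    then have "restr (K \<union> {\<Union>H}) Y = K \<union> {\<Union>H}" using True by (auto simp: restr_def)
    moreover have "ASC H" using conn.hyps(2,4) conn.prems(1) by (simp add: ASC_def)
    ultimately show ?thesis
      using True restr_self construction.conn[OF conn.hyps] by metis
  next
    case False
    then have "Y \<in> K" using conn.prems(2) by simp
    then have Y_sub: "Y \<subseteq> \<Union>H - {x}"
      using construction_members[OF conn.hyps(6)] by (auto simp: restr_def)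
    have "\<not> \<Union>H \<subseteq> Y" using Y_sub conn.hyps(5) by blast
    then have "restr (K \<union> {\<Union>H}) Y = restr K Y" by (rule restr_insert_not_subset)
    then show ?thesis
      using conn.IH[OF saturated_restr[OF conn.prems(1)] \<open>Y \<in> K\<close>]
      unfolding restr_restr[OF Y_sub] by simp
  qed
next
  case (disconn H P K)
  obtain B where B: "B \<in> P" "Y \<in> K B" using disconn.prems(2) by blast
  have hp: "hyp_partition H P" using disconn.hyps(4) by (simp add: finest_hyp_partition_def)
  have members: "\<forall>B'\<in>P. \<forall>Z\<in>K B'. Z \<noteq> {} \<and> Z \<subseteq> \<Union>B'"
    using disconn.IH construction_members by blast
  then have Y_sub: "Y \<subseteq> \<Union>B" using B by blast
  have "restr H Y = restr B Y"
    using restr_to_block[OF hp B(1) _ Y_sub] disconn.hyps(1) by (simp add: hypergraph_def)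
  moreover have "restr (\<Union>B'\<in>P. K B') Y = restr (K B) Y"
    using restr_UN_to_block[OF hp B(1) members Y_sub] .
  moreover have "ASC (restr B Y) \<and> construction (restr (K B) Y) (restr B Y)"
    using disconn.IH B saturated_block[OF disconn.prems(1) hp B(1)] by blast
  ultimately show ?case by simp
qed

theorem proposition7p1:
  fixes H L :: "'a set set" and Y :: "'a set"
  assumes "hypergraph H" and "ASC H" and "construction L H" and "Y \<in> L"
  shows "ASC (restr H Y) \<and> construction (restr L Y) (restr H Y)"
proof -
  have "saturated H" using assms(2) by (simp add: ASC_def)
  then show ?thesis using construction_restr[OF assms(3) _ assms(4)] by blast
qed

end
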